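(* Let $p\in[1,\infty)$, $s>2p$, let $\gamma_S$ be a finite Borel measure on $S$ with $\gamma_S(S)>0$, and let $\mu\in\mathcal P_s(X)$. Let $X_1,\dots,X_n$ be i.i.d. with law $\mu$ and $\mu^n:=\frac1n\sum_{k=1}^n\delta_{X_k}$. Then $$\mathbb E\,SW_p^\gamma(\mu^n,\mu)\le C\,n^{-\frac1{2p}},$$ where $C$ depends only on $p$, $s$ and $M_s(\mu)$.
   Context: $X$ is an infinite-dimensional separable real Hilbert space with inner product $\langle\cdot,\cdot\rangle$ and norm $\|\cdot\|$; $S=\{x\in X:\|x\|=1\}$. $\mathcal P_s(X)$ is the set of Borel probability measures on $X$ with $M_s(\mu):=\int_X\|x\|^s\,d\mu<\infty$. For $\theta\in S$, $P_\theta(x)=\langle\theta,x\rangle$, $\hat\mu_\theta:=P_\theta\#\mu$, and $$SW_p^\gamma(\mu,\nu)=\Big(\frac{1}{\gamma_S(S)}\int_S W_p^p(\hat\mu_\theta,\hat\nu_\theta)\,\gamma_S(d\theta)\Big)^{1/p},$$ with $W_p$ the $p$-Wasserstein distance between probability measures on $\mathbb R$. *)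

theory Defs
  imports "HOL-Probability.Probability"
begin

definition couplings :: "real measure \<Rightarrow> real measure \<Rightarrow> (real \<times> real) measure set" where
  "couplings \<mu> \<nu> = {\<pi>. prob_space \<pi> \<and> sets \<pi> = sets (borel :: (real \<times> real) measure)
      \<and> distr \<pi> borel fst = \<mu> \<and> distr \<pi> borel snd = \<nu>}"

definition Wasserstein_pow :: "real \<Rightarrow> real measure \<Rightarrow> real measure \<Rightarrow> ennreal" where
  "Wasserstein_pow p \<mu> \<nu> = (INF \<pi>\<in>couplings \<mu> \<nu>. \<integral>\<^sup>+ z. ennreal (\<bar>fst z - snd z\<bar> powr p) \<partial>\<pi>)"

definition proj_measure :: "'a::real_inner measure \<Rightarrow> 'a \<Rightarrow> real measure" where
  "proj_measure \<mu> \<theta> = distr \<mu> borel (\<lambda>x. \<theta> \<bullet> x)"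

definition sliced_W_pow :: "real \<Rightarrow> 'a::real_inner measure \<Rightarrow> 'a measure \<Rightarrow> 'a measure \<Rightarrow> ennreal" where
  "sliced_W_pow p \<gamma> \<mu> \<nu> =
     (\<integral>\<^sup>+ \<theta>. Wasserstein_pow p (proj_measure \<mu> \<theta>) (proj_measure \<nu> \<theta>) \<partial>\<gamma>) / emeasure \<gamma> (sphere 0 1)"

definition sliced_W :: "real \<Rightarrow> 'a::real_inner measure \<Rightarrow> 'a measure \<Rightarrow> 'a measure \<Rightarrow> ennreal" where
  "sliced_W p \<gamma> \<mu> \<nu> =
     (if sliced_W_pow p \<gamma> \<mu> \<nu> = \<infinity> then \<infinity>
      else ennreal ((enn2real (sliced_W_pow p \<gamma> \<mu> \<nu>)) powr (1 / p)))"

definition empirical_measure :: "'a list \<Rightarrow> 'a measure" where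
  "empirical_measure xs = measure_pmf (pmf_of_multiset (mset xs))"

definition moment :: "real \<Rightarrow> 'a::real_normed_vector measure \<Rightarrow> ennreal" where
  "moment s \<mu> = (\<integral>\<^sup>+ x. ennreal (norm x powr s) \<partial>\<mu>)"

end

theory Submission
  imports Defs
begin

text \<open>Couple two laws on the real line through their quantile functions: writing \<open>|a - b|\<^sup>p\<close> as an
  integral of \<open>|x|\<^bsup>p-1\<^esup>\<close> over \<open>[a, b)\<close> and exchanging the integrals gives
  \<open>W\<^sub>p\<^sup>p \<le> p 2\<^sup>p \<integral> |x|\<^bsup>p-1\<^esup> |F\<^sub>1(x) - F\<^sub>2(x)| dx\<close>. For the projection onto a unit
  direction \<open>\<theta>\<close>, the empirical distribution function at \<open>x\<close> is a mean of \<open>n\<close> i.i.d. indicators, so its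
  expected deviation from \<open>F(x)\<close> is at most \<open>(F(x)(1 - F(x))/n)\<^bsup>1/2\<^esup>\<close>; by Markov's inequality for the
  \<open>s\<close>-th moment, \<open>F(x)(1 - F(x)) \<le> (M + 1) |x|\<^bsup>-s\<^esup>\<close>, and \<open>|x|\<^bsup>p-1-s/2\<^esup>\<close> is integrable at infinity
  because \<open>s > 2p\<close>. Hence the expected \<open>p\<close>-th power of the sliced distance is \<open>O(n\<^bsup>-1/2\<^esup>)\<close> uniformly
  in \<open>\<theta>\<close>, and Jensen's inequality for the concave \<open>p\<close>-th root gives \<open>O(n\<^bsup>-1/(2p)\<^esup>)\<close>.\<close>

section \<open>Wasserstein distance on the real line\<close>

definition quantile :: "real measure \<Rightarrow> real \<Rightarrow> real" where
  "quantile \<nu> u = Inf {x. u \<le> cdf \<nu> x}"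

lemma nn_integral_powr_interval:
  fixes p L :: real
  assumes p: "p > 0" and L: "L \<ge> 0"
  shows "(\<integral>\<^sup>+x. ennreal (x powr (p - 1)) * indicator {0<..<L} x \<partial>lborel) = ennreal (L powr p / p)"
proof -
  have "(\<integral>\<^sup>+x. ennreal (x powr (p - 1)) * indicator {0<..<L} x \<partial>lborel) =
        (\<integral>\<^sup>+x. ennreal (x powr (p - 1)) * indicator {0..L} x \<partial>lborel)"
  proof (rule nn_integral_cong_AE)
    show "AE x in lborel. ennreal (x powr (p - 1)) * indicator {0<..<L} x =
        ennreal (x powr (p - 1)) * indicator {0..L} x"
      using AE_lborel_singleton[of 0] AE_lborel_singleton[of L]
      by eventually_elim (auto simp: indicator_def)
  qed
  also have "\<dots> = ennreal (L powr (p - 1 + 1) / (p - 1 + 1))"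
    using p L has_integral_powr_from_0[of "p - 1" L]
    by (intro nn_integral_has_integral_lebesgue') auto
  finally show ?thesis by simp
qed

lemma nn_integral_powr_dist_interval:
  fixes p m L :: real
  assumes p: "p > 0" and L: "L \<ge> 0"
  shows "(\<integral>\<^sup>+x. ennreal ((x - m) powr (p - 1)) * indicator {m<..<m + L} x \<partial>lborel) = ennreal (L powr p / p)"
    and "(\<integral>\<^sup>+x. ennreal ((m - x) powr (p - 1)) * indicator {m - L<..<m} x \<partial>lborel) = ennreal (L powr p / p)"
proof -
  have "(\<integral>\<^sup>+x. ennreal ((x - m) powr (p - 1)) * indicator {m<..<m + L} x \<partial>lborel)
     = (\<integral>\<^sup>+x. ennreal ((x - m) powr (p - 1)) * indicator {m<..<m + L} x \<partial>distr lborel borel ((+) m))"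
    by (simp add: lborel_distr_plus)
  also have "\<dots> = (\<integral>\<^sup>+x. ennreal (x powr (p - 1)) * indicator {0<..<L} x \<partial>lborel)"
    by (subst nn_integral_distr) (auto intro!: nn_integral_cong simp: indicator_def)
  finally show "(\<integral>\<^sup>+x. ennreal ((x - m) powr (p - 1)) * indicator {m<..<m + L} x \<partial>lborel) = ennreal (L powr p / p)"
    using nn_integral_powr_interval[OF p L] by simp
  have "(\<integral>\<^sup>+x. ennreal ((m - x) powr (p - 1)) * indicator {m - L<..<m} x \<partial>lborel)
     = (\<integral>\<^sup>+x. ennreal ((m - x) powr (p - 1)) * indicator {m - L<..<m} x \<partial>distr lborel borel ((+) m))"
    by (simp add: lborel_distr_plus)
  also have "\<dots> = (\<integral>\<^sup>+x. ennreal ((- x) powr (p - 1)) * indicator {-L<..<0} x \<partial>lborel)"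
    by (subst nn_integral_distr) (auto intro!: nn_integral_cong simp: indicator_def)
  also have "\<dots> = (\<integral>\<^sup>+x. ennreal ((- x) powr (p - 1)) * indicator {-L<..<0} x \<partial>distr lborel borel uminus)"
    by (simp add: lborel_distr_uminus)
  also have "\<dots> = (\<integral>\<^sup>+x. ennreal (x powr (p - 1)) * indicator {0<..<L} x \<partial>lborel)"
    by (subst nn_integral_distr) (auto intro!: nn_integral_cong simp: indicator_def)
  finally show "(\<integral>\<^sup>+x. ennreal ((m - x) powr (p - 1)) * indicator {m - L<..<m} x \<partial>lborel) = ennreal (L powr p / p)"
    using nn_integral_powr_interval[OF p L] by simp
qed

text \<open>The half of \<open>[min a b, max a b)\<close> lying farther from \<open>0\<close> has length \<open>|a - b| / 2\<close>, and on it
  \<open>|x|\<close> dominates the distance to the midpoint.\<close>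
lemma abs_diff_powr_le_nn_integral:
  fixes p a b :: real
  assumes p: "p \<ge> 1"
  shows "ennreal (\<bar>a - b\<bar> powr p) \<le> ennreal (p * 2 powr p) *
     (\<integral>\<^sup>+x. ennreal (\<bar>x\<bar> powr (p - 1)) * indicator {min a b..<max a b} x \<partial>lborel)"
proof -
  define lo hi where "lo = min a b" and "hi = max a b"
  define L m where "L = (hi - lo) / 2" and "m = (hi + lo) / 2"
  have mL: "m + L = hi" "m - L = lo" and lm: "lo \<le> m" "m \<le> hi" and L0: "L \<ge> 0"
    and ab: "\<bar>a - b\<bar> = 2 * L"
    using lo_def hi_def L_def m_def by (auto simp: field_simps)
  have p0: "p > 0" using p by simp
  have half: "ennreal (L powr p / p) \<le> (\<integral>\<^sup>+x. ennreal (\<bar>x\<bar> powr (p - 1)) * indicator {lo..<hi} x \<partial>lborel)"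
  proof (cases "m \<ge> 0")
    case True
    have "ennreal (L powr p / p) = (\<integral>\<^sup>+x. ennreal ((x - m) powr (p - 1)) * indicator {m<..<m + L} x \<partial>lborel)"
      using nn_integral_powr_dist_interval(1)[OF p0 L0, of m] by simp
    also have "\<dots> \<le> (\<integral>\<^sup>+x. ennreal (\<bar>x\<bar> powr (p - 1)) * indicator {lo..<hi} x \<partial>lborel)"
      using True p lm by (intro nn_integral_mono) (auto simp: indicator_def mL intro!: powr_mono2)
    finally show ?thesis .
  next
    case False
    have "ennreal (L powr p / p) = (\<integral>\<^sup>+x. ennreal ((m - x) powr (p - 1)) * indicator {m - L<..<m} x \<partial>lborel)"
      using nn_integral_powr_dist_interval(2)[OF p0 L0, of m] by simp
    also have "\<dots> \<le> (\<integral>\<^sup>+x. ennreal (\<bar>x\<bar> powr (p - 1)) * indicator {lo..<hi} x \<partial>lborel)"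
      using False p lm by (intro nn_integral_mono) (auto simp: indicator_def mL intro!: powr_mono2)
    finally show ?thesis .
  qed
  have "ennreal (\<bar>a - b\<bar> powr p) = ennreal (p * 2 powr p) * ennreal (L powr p / p)"
    using p L0 by (simp add: ab powr_mult flip: ennreal_mult)
  also have "\<dots> \<le> ennreal (p * 2 powr p) * (\<integral>\<^sup>+x. ennreal (\<bar>x\<bar> powr (p - 1)) * indicator {lo..<hi} x \<partial>lborel)"
    by (intro mult_left_mono half) auto
  finally show ?thesis using lo_def hi_def by simp
qed

lemma Wasserstein_pow_le_quantile_coupling:
  assumes "real_distribution \<nu>\<^sub>1" and "real_distribution \<nu>\<^sub>2"
  shows "Wasserstein_pow p \<nu>\<^sub>1 \<nu>\<^sub>2 \<le> (\<integral>\<^sup>+u. ennreal (\<bar>quantile \<nu>\<^sub>1 u - quantile \<nu>\<^sub>2 u\<bar> powr p)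
           \<partial>restrict_space lborel {0<..<1})"
proof -
  interpret A: cdf_distribution \<nu>\<^sub>1 using assms(1) by (simp add: cdf_distribution_def)
  interpret B: cdf_distribution \<nu>\<^sub>2 using assms(2) by (simp add: cdf_distribution_def)
  define U where "U = restrict_space lborel {0<..<1::real}"
  interpret U: prob_space U
    by (auto simp: U_def emeasure_restrict_space space_restrict_space intro!: prob_spaceI)
  have U_borel: "borel_measurable U = borel_measurable (restrict_space borel {0<..<1})"
    unfolding U_def by (rule measurable_cong_sets) (simp_all add: sets_restrict_space)
  have [measurable]: "A.I \<in> borel_measurable U" "B.I \<in> borel_measurable U"
    unfolding U_borel by (rule A.measurable_CI B.measurable_CI)+
  have [measurable]: "fst \<in> borel_measurable (borel :: (real \<times> real) measure)"
    "snd \<in> borel_measurable (borel :: (real \<times> real) measure)"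
    by (simp_all flip: borel_prod)
  define \<pi> where "\<pi> = distr U borel (\<lambda>u. (A.I u, B.I u))"
  have "\<pi> \<in> couplings \<nu>\<^sub>1 \<nu>\<^sub>2"
    unfolding couplings_def
  proof (intro CollectI conjI)
    show "prob_space \<pi>" unfolding \<pi>_def by (rule U.prob_space_distr) simp
    show "sets \<pi> = sets borel" unfolding \<pi>_def by simp
    show "distr \<pi> borel fst = \<nu>\<^sub>1" unfolding \<pi>_def
      by (subst distr_distr) (simp_all add: comp_def A.distr_I_eq_M[folded U_def])
    show "distr \<pi> borel snd = \<nu>\<^sub>2" unfolding \<pi>_def
      by (subst distr_distr) (simp_all add: comp_def B.distr_I_eq_M[folded U_def])
  qed
  then have "Wasserstein_pow p \<nu>\<^sub>1 \<nu>\<^sub>2 \<le> (\<integral>\<^sup>+z. ennreal (\<bar>fst z - snd z\<bar> powr p) \<partial>\<pi>)"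
    unfolding Wasserstein_pow_def by (rule INF_lower)
  also have "\<dots> = (\<integral>\<^sup>+u. ennreal (\<bar>A.I u - B.I u\<bar> powr p) \<partial>U)"
    unfolding \<pi>_def by (subst nn_integral_distr) auto
  finally show ?thesis by (simp add: U_def quantile_def)
qed

lemma indicator_quantile_interval_le:
  assumes "real_distribution \<nu>\<^sub>1" and "real_distribution \<nu>\<^sub>2" and "0 < u" "u < 1"
  shows "indicator {min (quantile \<nu>\<^sub>1 u) (quantile \<nu>\<^sub>2 u)..<max (quantile \<nu>\<^sub>1 u) (quantile \<nu>\<^sub>2 u)} x
    \<le> (indicator {min (cdf \<nu>\<^sub>1 x) (cdf \<nu>\<^sub>2 x)<..max (cdf \<nu>\<^sub>1 x) (cdf \<nu>\<^sub>2 x)} u :: ennreal)"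
proof -
  interpret A: cdf_distribution \<nu>\<^sub>1 using assms(1) by (simp add: cdf_distribution_def)
  interpret B: cdf_distribution \<nu>\<^sub>2 using assms(2) by (simp add: cdf_distribution_def)
  have "u \<le> cdf \<nu>\<^sub>1 x \<longleftrightarrow> quantile \<nu>\<^sub>1 u \<le> x" "u \<le> cdf \<nu>\<^sub>2 x \<longleftrightarrow> quantile \<nu>\<^sub>2 u \<le> x"
    unfolding quantile_def by (rule A.pseudoinverse[OF assms(3,4)] B.pseudoinverse[OF assms(3,4)])+
  then show ?thesis by (auto simp: indicator_def)
qed

text \<open>The quantile coupling, with \<open>|a - b|\<^sup>p\<close> written as an integral over \<open>[a, b)\<close> and the order of
  integration swapped.\<close>
lemma Wasserstein_pow_le_cdf_integral:
  fixes p :: real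
  assumes p: "p \<ge> 1" and \<nu>: "real_distribution \<nu>\<^sub>1" "real_distribution \<nu>\<^sub>2"
  shows "Wasserstein_pow p \<nu>\<^sub>1 \<nu>\<^sub>2 \<le> ennreal (p * 2 powr p) *
     (\<integral>\<^sup>+x. ennreal (\<bar>x\<bar> powr (p - 1) * \<bar>cdf \<nu>\<^sub>1 x - cdf \<nu>\<^sub>2 x\<bar>) \<partial>lborel)"
proof -
  interpret A: cdf_distribution \<nu>\<^sub>1 using \<nu>(1) by (simp add: cdf_distribution_def)
  interpret B: cdf_distribution \<nu>\<^sub>2 using \<nu>(2) by (simp add: cdf_distribution_def)
  define U where "U = restrict_space lborel {0<..<1::real}"
  interpret pair_sigma_finite U lborel
    by (auto simp: U_def sigma_finite_measure_restrict_space pair_sigma_finite_def lborel.sigma_finite_measure_axioms)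
  have U_borel: "borel_measurable U = borel_measurable (restrict_space borel {0<..<1})"
    unfolding U_def by (rule measurable_cong_sets) (simp_all add: sets_restrict_space)
  have [measurable]: "quantile \<nu>\<^sub>1 \<in> borel_measurable U" "quantile \<nu>\<^sub>2 \<in> borel_measurable U"
    unfolding U_borel quantile_def[abs_def] by (rule A.measurable_CI B.measurable_CI)+
  define J where "J u x = ennreal (\<bar>x\<bar> powr (p - 1)) *
    indicator {min (quantile \<nu>\<^sub>1 u) (quantile \<nu>\<^sub>2 u)..<max (quantile \<nu>\<^sub>1 u) (quantile \<nu>\<^sub>2 u)} x" for u x
  have J_measurable[measurable]: "case_prod J \<in> borel_measurable (U \<Otimes>\<^sub>M lborel)"
    unfolding J_def split_beta' indicator_def atLeastLessThan_iff by measurable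
  have "Wasserstein_pow p \<nu>\<^sub>1 \<nu>\<^sub>2 \<le> (\<integral>\<^sup>+u. ennreal (\<bar>quantile \<nu>\<^sub>1 u - quantile \<nu>\<^sub>2 u\<bar> powr p) \<partial>U)"
    unfolding U_def by (rule Wasserstein_pow_le_quantile_coupling[OF \<nu>])
  also have "\<dots> \<le> (\<integral>\<^sup>+u. ennreal (p * 2 powr p) * (\<integral>\<^sup>+x. J u x \<partial>lborel) \<partial>U)"
    unfolding J_def by (intro nn_integral_mono abs_diff_powr_le_nn_integral p)
  also have "\<dots> = ennreal (p * 2 powr p) * (\<integral>\<^sup>+u. (\<integral>\<^sup>+x. J u x \<partial>lborel) \<partial>U)"
    by (rule nn_integral_cmult) measurable
  also have "\<dots> = ennreal (p * 2 powr p) * (\<integral>\<^sup>+x. (\<integral>\<^sup>+u. J u x \<partial>U) \<partial>lborel)"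
    unfolding Fubini'[OF J_measurable] ..
  also have "\<dots> \<le> ennreal (p * 2 powr p) * (\<integral>\<^sup>+x. ennreal (\<bar>x\<bar> powr (p - 1) * \<bar>cdf \<nu>\<^sub>1 x - cdf \<nu>\<^sub>2 x\<bar>) \<partial>lborel)"
  proof (intro mult_left_mono nn_integral_mono)
    fix x :: real
    define lo hi where "lo = min (cdf \<nu>\<^sub>1 x) (cdf \<nu>\<^sub>2 x)" and "hi = max (cdf \<nu>\<^sub>1 x) (cdf \<nu>\<^sub>2 x)"
    have "(\<integral>\<^sup>+u. J u x \<partial>U) \<le> (\<integral>\<^sup>+u. ennreal (\<bar>x\<bar> powr (p - 1)) * indicator ({lo<..hi} \<inter> {0<..<1}) u \<partial>U)"
      unfolding J_def
    proof (intro nn_integral_mono mult_left_mono)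
      fix u assume "u \<in> space U"
      then have u: "0 < u" "u < 1" by (auto simp: U_def space_restrict_space)
      then show "indicator {min (quantile \<nu>\<^sub>1 u) (quantile \<nu>\<^sub>2 u)..<max (quantile \<nu>\<^sub>1 u) (quantile \<nu>\<^sub>2 u)} x
          \<le> (indicator ({lo<..hi} \<inter> {0<..<1}) u :: ennreal)"
        using indicator_quantile_interval_le[OF \<nu> u, of x] by (simp add: lo_def hi_def indicator_inter_arith)
    qed simp
    also have "\<dots> = ennreal (\<bar>x\<bar> powr (p - 1)) * emeasure lborel ({lo<..hi} \<inter> {0<..<1})"
      by (subst nn_integral_cmult_indicator) (auto simp: U_def sets_restrict_space emeasure_restrict_space)
    also have "\<dots> \<le> ennreal (\<bar>x\<bar> powr (p - 1)) * emeasure lborel {lo<..hi}"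
      by (intro mult_left_mono emeasure_mono) simp_all
    also have "\<dots> = ennreal (\<bar>x\<bar> powr (p - 1) * \<bar>cdf \<nu>\<^sub>1 x - cdf \<nu>\<^sub>2 x\<bar>)"
      by (simp add: lo_def hi_def ennreal_mult[symmetric] max_def min_def)
    finally show "(\<integral>\<^sup>+u. J u x \<partial>U) \<le> ennreal (\<bar>x\<bar> powr (p - 1) * \<bar>cdf \<nu>\<^sub>1 x - cdf \<nu>\<^sub>2 x\<bar>)" .
  qed simp
  finally show ?thesis .
qed

section \<open>Deviation of empirical frequencies\<close>

lemma measure_empirical_measure:
  fixes X :: "nat \<Rightarrow> 'a"
  assumes n: "n \<ge> 1"
  shows "measure (empirical_measure (map X [1..<n+1])) A = (\<Sum>k\<in>{1..n}. indicator A (X k)) / real n"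
proof -
  have fin: "finite {1..n}" "{1..n} \<noteq> {}" using n by auto
  have "mset (map X [1..<n+1]) = image_mset X (mset_set {1..n})"
    by (metis mset_map mset_upt atLeastLessThanSuc_atLeastAtMost Suc_eq_plus1)
  then have "pmf_of_multiset (mset (map X [1..<n+1])) = map_pmf X (pmf_of_set {1..n})"
    by (simp only: map_pmf_of_set[OF fin])
  then have "measure (empirical_measure (map X [1..<n+1])) A = measure (pmf_of_set {1..n}) (X -` A)"
    by (simp add: empirical_measure_def)
  also have "\<dots> = card ({1..n} \<inter> X -` A) / real n"
    using fin by (simp add: measure_pmf_of_set)
  also have "real (card ({1..n} \<inter> X -` A)) = (\<Sum>k\<in>{1..n}. indicator A (X k))"
    using sum.inter_restrict[OF fin(1), of "\<lambda>_. 1::real" "X -` A"] by (simp add: indicator_def vimage_def)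
  finally show ?thesis .
qed

lemma (in prob_space) expectation_empirical_frequency_deviation_square:
  fixes X :: "nat \<Rightarrow> 'a \<Rightarrow> 'b::topological_space"
  assumes indep: "indep_vars (\<lambda>_. borel) X {1..n}"
    and distr_X: "\<And>k. k \<in> {1..n} \<Longrightarrow> distr M borel (X k) = \<mu>"
    and A: "A \<in> sets borel" and n: "n \<ge> 1"
  shows "expectation (\<lambda>\<omega>. ((\<Sum>k\<in>{1..n}. indicator A (X k \<omega>)) / real n - measure \<mu> A)\<^sup>2)
    = measure \<mu> A * (1 - measure \<mu> A) / n"
proof -
  define q where "q = measure \<mu> A"
  have [measurable]: "X k \<in> borel_measurable M" if "k \<in> {1..n}" for k
    using indep that unfolding indep_vars_def by auto
  define W where "W k \<omega> = indicator A (X k \<omega>) - q" for k \<omega>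
  have q: "0 \<le> q" "q \<le> 1"
  proof -
    interpret D: prob_space "distr M borel (X 1)" using n by (intro prob_space_distr) auto
    show "0 \<le> q" "q \<le> 1" using distr_X[of 1] n D.prob_le_1 by (auto simp: q_def)
  qed
  have W_bounded: "\<bar>W k \<omega>\<bar> \<le> 1" for k \<omega>
    using q by (auto simp: W_def indicator_def)
  have [measurable]: "W k \<in> borel_measurable M" if "k \<in> {1..n}" for k
    unfolding W_def using that A by measurable
  have integrable_W: "integrable M (W k)" if "k \<in> {1..n}" for k
    using that W_bounded A by (intro integrable_const_bound[where B=1]) (auto simp: W_def)
  have integrable_WW: "integrable M (\<lambda>\<omega>. W j \<omega> * W k \<omega>)" if "j \<in> {1..n}" "k \<in> {1..n}" for j k
    using that W_bounded A
    by (intro integrable_const_bound[where B=1]) (auto simp: W_def abs_mult intro!: mult_le_one)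
  have expectation_indicator: "expectation (\<lambda>\<omega>. indicator A (X k \<omega>)) = q" if k: "k \<in> {1..n}" for k
  proof -
    have "expectation (\<lambda>\<omega>. indicator A (X k \<omega>)) = (integral\<^sup>L (distr M borel (X k)) (indicator A) :: real)"
      using integral_distr[of "X k" M borel "indicator A :: _ \<Rightarrow> real"] k A by (simp del: integral_indicator)
    also have "\<dots> = measure (distr M borel (X k)) A"
      using A by (simp add: measure_def)
    finally show ?thesis using distr_X[OF k] by (simp add: q_def)
  qed
  have covariance: "expectation (\<lambda>\<omega>. W j \<omega> * W k \<omega>) = (if j = k then q * (1 - q) else 0)"
    if jk: "j \<in> {1..n}" "k \<in> {1..n}" for j k
  proof (cases "j = k")
    case True
    have "(\<lambda>\<omega>. W k \<omega> * W k \<omega>) = (\<lambda>\<omega>. (1 - 2 * q) * indicator A (X k \<omega>) + q * q)"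
      by (auto simp: W_def indicator_def fun_eq_iff algebra_simps)
    then have "expectation (\<lambda>\<omega>. W k \<omega> * W k \<omega>) = (1 - 2 * q) * q + q * q"
      using jk A expectation_indicator[of k]
      by (simp add: Bochner_Integration.integral_add integrable_const_bound[where B=1] prob_space)
    then show ?thesis using True by (simp add: algebra_simps)
  next
    case False
    have "indep_vars (\<lambda>_. borel) (\<lambda>i \<omega>. indicator A (X i \<omega>) - q) {1..n}"
      using A by (intro indep_vars_compose2[OF indep]) auto
    then have "indep_vars (\<lambda>_. borel) W {j, k}"
      unfolding W_def[abs_def] using jk by (elim indep_vars_subset) auto
    then have "expectation (\<lambda>\<omega>. \<Prod>i\<in>{j, k}. W i \<omega>) = (\<Prod>i\<in>{j, k}. expectation (W i))"
      using jk by (intro indep_vars_lebesgue_integral integrable_W) auto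
    moreover have "expectation (W i) = 0" if i: "i \<in> {1..n}" for i
    proof -
      have "expectation (W i) = expectation (\<lambda>\<omega>. indicator A (X i \<omega>)) - expectation (\<lambda>\<omega>. q)"
        unfolding W_def using i A q
        by (intro Bochner_Integration.integral_diff integrable_const_bound[where B=1]) auto
      then show ?thesis using expectation_indicator[OF i] by (simp add: prob_space)
    qed
    ultimately show ?thesis using jk False by simp
  qed
  have "(\<Sum>k\<in>{1..n}. indicator A (X k \<omega>)) / real n - q = (\<Sum>k\<in>{1..n}. W k \<omega>) / real n" for \<omega>
    using n by (simp add: W_def sum_subtractf field_simps)
  then have "(\<lambda>\<omega>. ((\<Sum>k\<in>{1..n}. indicator A (X k \<omega>)) / real n - q)\<^sup>2)
      = (\<lambda>\<omega>. (\<Sum>j\<in>{1..n}. \<Sum>k\<in>{1..n}. W j \<omega> * W k \<omega>) / (real n)\<^sup>2)"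
    by (simp add: power_divide power2_eq_square sum_product)
  moreover have "expectation (\<lambda>\<omega>. \<Sum>j\<in>{1..n}. \<Sum>k\<in>{1..n}. W j \<omega> * W k \<omega>)
      = (\<Sum>j\<in>{1..n}. \<Sum>k\<in>{1..n}. expectation (\<lambda>\<omega>. W j \<omega> * W k \<omega>))"
    using integrable_WW
    by (simp add: Bochner_Integration.integral_sum Bochner_Integration.integrable_sum del: atLeastAtMost_iff)
  ultimately have "expectation (\<lambda>\<omega>. ((\<Sum>k\<in>{1..n}. indicator A (X k \<omega>)) / real n - q)\<^sup>2)
      = (\<Sum>j\<in>{1..n}. \<Sum>k\<in>{1..n}. expectation (\<lambda>\<omega>. W j \<omega> * W k \<omega>)) / (real n)\<^sup>2"
    by simp
  also have "\<dots> = q * (1 - q) / n"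
    using n by (simp add: covariance power2_eq_square)
  finally show ?thesis by (simp add: q_def)
qed

lemma (in prob_space) nn_integral_abs_le_sqrt:
  fixes D :: "'a \<Rightarrow> real"
  assumes "integrable M (\<lambda>\<omega>. (D \<omega>)\<^sup>2)" and "expectation (\<lambda>\<omega>. (D \<omega>)\<^sup>2) \<le> v" and "v > 0"
  shows "(\<integral>\<^sup>+\<omega>. ennreal \<bar>D \<omega>\<bar> \<partial>M) \<le> ennreal (sqrt v)"
proof -
  define \<epsilon> where "\<epsilon> = sqrt v"
  have \<epsilon>: "\<epsilon> > 0" "\<epsilon>\<^sup>2 = v" using assms(3) by (simp_all add: \<epsilon>_def)
  have am_gm: "\<bar>d\<bar> \<le> (d\<^sup>2 / \<epsilon> + \<epsilon>) / 2" for d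
  proof -
    have "0 \<le> (\<bar>d\<bar> - \<epsilon>)\<^sup>2 / \<epsilon>" using \<epsilon> by simp
    also have "\<dots> = d\<^sup>2 / \<epsilon> + \<epsilon> - 2 * \<bar>d\<bar>"
      using \<epsilon> by (simp add: power2_eq_square field_simps)
    finally show ?thesis by simp
  qed
  have "(\<integral>\<^sup>+\<omega>. ennreal \<bar>D \<omega>\<bar> \<partial>M) \<le> (\<integral>\<^sup>+\<omega>. ennreal (((D \<omega>)\<^sup>2 / \<epsilon> + \<epsilon>) / 2) \<partial>M)"
    by (intro nn_integral_mono ennreal_leI am_gm)
  also have "\<dots> = ennreal (expectation (\<lambda>\<omega>. ((D \<omega>)\<^sup>2 / \<epsilon> + \<epsilon>) / 2))"
    using assms(1) \<epsilon> by (intro nn_integral_eq_integral) auto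
  also have "expectation (\<lambda>\<omega>. ((D \<omega>)\<^sup>2 / \<epsilon> + \<epsilon>) / 2) = (expectation (\<lambda>\<omega>. (D \<omega>)\<^sup>2) / \<epsilon> + \<epsilon>) / 2"
    using assms(1) by (simp add: prob_space)
  also have "\<dots> \<le> (\<epsilon>\<^sup>2 / \<epsilon> + \<epsilon>) / 2"
    using assms(2) \<epsilon> by (intro divide_right_mono add_right_mono) auto
  also have "\<dots> = sqrt v"
    using \<epsilon> by (simp add: \<epsilon>_def real_div_sqrt)
  finally show ?thesis using ennreal_leI by blast
qed

lemma (in prob_space) nn_integral_empirical_frequency_deviation_le:
  fixes X :: "nat \<Rightarrow> 'a \<Rightarrow> 'b::topological_space"
  assumes indep: "indep_vars (\<lambda>_. borel) X {1..n}"
    and distr_X: "\<And>k. k \<in> {1..n} \<Longrightarrow> distr M borel (X k) = \<mu>"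
    and A: "A \<in> sets borel" and n: "n \<ge> 1"
    and v: "v > 0" "measure \<mu> A * (1 - measure \<mu> A) \<le> v"
  shows "(\<integral>\<^sup>+\<omega>. ennreal \<bar>(\<Sum>k\<in>{1..n}. indicator A (X k \<omega>)) / real n - measure \<mu> A\<bar> \<partial>M)
    \<le> ennreal (sqrt (v / n))"
proof (rule nn_integral_abs_le_sqrt)
  have [measurable]: "X k \<in> borel_measurable M" if "k \<in> {1..n}" for k
    using indep that unfolding indep_vars_def by auto
  have q_le_1: "measure \<mu> A \<le> 1"
  proof -
    interpret D: prob_space "distr M borel (X 1)" using n by (intro prob_space_distr) auto
    show ?thesis using distr_X[of 1] n D.prob_le_1 by auto
  qed
  have mean: "0 \<le> (\<Sum>k\<in>{1..n}. indicator A (X k \<omega>)) / real n" "(\<Sum>k\<in>{1..n}. indicator A (X k \<omega>)) / real n \<le> 1" for \<omega>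
    using n sum_bounded_above[of "{1..n}" "\<lambda>k. indicator A (X k \<omega>) :: real" 1]
    by (auto simp: sum_nonneg divide_le_eq)
  have "\<bar>(\<Sum>k\<in>{1..n}. indicator A (X k \<omega>)) / real n - measure \<mu> A\<bar> \<le> 1" for \<omega>
    unfolding abs_le_iff using mean[of \<omega>] q_le_1 measure_nonneg[of \<mu> A] by linarith
  then have "\<bar>((\<Sum>k\<in>{1..n}. indicator A (X k \<omega>)) / real n - measure \<mu> A)\<^sup>2\<bar> \<le> 1" for \<omega>
    by (simp only: abs_power2 abs_square_le_1)
  then show "integrable M (\<lambda>\<omega>. ((\<Sum>k\<in>{1..n}. indicator A (X k \<omega>)) / real n - measure \<mu> A)\<^sup>2)"
    using A by (intro integrable_const_bound[where B=1]) auto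
  show "expectation (\<lambda>\<omega>. ((\<Sum>k\<in>{1..n}. indicator A (X k \<omega>)) / real n - measure \<mu> A)\<^sup>2) \<le> v / n"
    using v expectation_empirical_frequency_deviation_square[OF indep distr_X A n]
    by (simp add: divide_right_mono)
qed (use v n in simp)

section \<open>Distribution functions of projections under a moment bound\<close>

lemma measure_abs_inner_ge_le_moment:
  fixes \<mu> :: "'a::{real_inner, polish_space} measure" and \<theta> :: 'a
  assumes \<mu>: "prob_space \<mu>" "sets \<mu> = sets borel" "moment s \<mu> = ennreal M"
    and s: "s \<ge> 0" and \<theta>: "norm \<theta> \<le> 1" and t: "t > 0"
  shows "measure \<mu> {y. t \<le> \<bar>\<theta> \<bullet> y\<bar>} \<le> max M 0 / t powr s"
proof -
  interpret prob_space \<mu> by fact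
  have [measurable]: "{y. t \<le> \<bar>\<theta> \<bullet> y\<bar>} \<in> sets \<mu>"
    using \<mu>(2) by simp
  have "ennreal (t powr s) * emeasure \<mu> {y. t \<le> \<bar>\<theta> \<bullet> y\<bar>}
      = (\<integral>\<^sup>+y. ennreal (t powr s) * indicator {y. t \<le> \<bar>\<theta> \<bullet> y\<bar>} y \<partial>\<mu>)"
    by (simp add: nn_integral_cmult_indicator)
  also have "\<dots> \<le> (\<integral>\<^sup>+y. ennreal (norm y powr s) \<partial>\<mu>)"
  proof (rule nn_integral_mono)
    fix y
    have "\<bar>\<theta> \<bullet> y\<bar> \<le> norm y"
      using Cauchy_Schwarz_ineq2[of \<theta> y] \<theta> mult_left_le_one_le[of "norm y" "norm \<theta>"] by simp
    then show "ennreal (t powr s) * indicator {y. t \<le> \<bar>\<theta> \<bullet> y\<bar>} y \<le> ennreal (norm y powr s)"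
      using s t by (auto simp: indicator_def intro!: ennreal_leI powr_mono2)
  qed
  also have "\<dots> = ennreal (max M 0)"
    using \<mu>(3) by (simp add: moment_def max_def ennreal_neg)
  finally have "ennreal (t powr s * measure \<mu> {y. t \<le> \<bar>\<theta> \<bullet> y\<bar>}) \<le> ennreal (max M 0)"
    by (simp add: emeasure_eq_measure ennreal_mult)
  then have "t powr s * measure \<mu> {y. t \<le> \<bar>\<theta> \<bullet> y\<bar>} \<le> max M 0"
    by (subst (asm) ennreal_le_iff) auto
  then show ?thesis using t by (simp add: field_simps)
qed

text \<open>Markov's inequality for the \<open>s\<close>-th moment; the \<open>+ 1\<close> keeps the bound positive.\<close>
definition moment_tail_bound :: "real \<Rightarrow> real \<Rightarrow> real \<Rightarrow> real" where
  "moment_tail_bound s M x = (if \<bar>x\<bar> \<le> 1 then 1 else (max M 0 + 1) / \<bar>x\<bar> powr s)"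

lemma moment_tail_bound_pos: "moment_tail_bound s M x > 0"
  by (auto simp: moment_tail_bound_def)

lemma cdf_variance_le_moment_tail_bound:
  fixes \<mu> :: "'a::{real_inner, polish_space} measure" and \<theta> :: 'a
  assumes \<mu>: "prob_space \<mu>" "sets \<mu> = sets borel" "moment s \<mu> = ennreal M"
    and s: "s \<ge> 0" and \<theta>: "norm \<theta> \<le> 1"
  shows "measure \<mu> {y. \<theta> \<bullet> y \<le> x} * (1 - measure \<mu> {y. \<theta> \<bullet> y \<le> x}) \<le> moment_tail_bound s M x"
proof -
  interpret prob_space \<mu> by fact
  have space: "space \<mu> = UNIV" using sets_eq_imp_space_eq[OF \<mu>(2)] by simp
  have sets: "{y. \<theta> \<bullet> y \<le> x} \<in> sets \<mu>" "{y. \<bar>x\<bar> \<le> \<bar>\<theta> \<bullet> y\<bar>} \<in> sets \<mu>"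
    using \<mu>(2) by simp_all
  define F where "F = measure \<mu> {y. \<theta> \<bullet> y \<le> x}"
  have F: "0 \<le> F" "F \<le> 1" unfolding F_def by auto
  show ?thesis
  proof (cases "\<bar>x\<bar> \<le> 1")
    case True
    then show ?thesis using F by (simp add: moment_tail_bound_def F_def[symmetric] mult_le_one)
  next
    case False
    \<comment> \<open>\<open>F (1 - F) \<le> min F (1 - F)\<close>, and the smaller of the two is a tail probability.\<close>
    have "F * (1 - F) \<le> measure \<mu> {y. \<bar>x\<bar> \<le> \<bar>\<theta> \<bullet> y\<bar>}"
    proof (cases "x > 0")
      case True
      have "1 - F = measure \<mu> (space \<mu> - {y. \<theta> \<bullet> y \<le> x})"
        unfolding F_def using sets(1) by (simp add: prob_compl)
      also have "\<dots> \<le> measure \<mu> {y. \<bar>x\<bar> \<le> \<bar>\<theta> \<bullet> y\<bar>}"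
        using True sets(2) by (intro finite_measure_mono) (auto simp: space)
      finally show ?thesis using F by (smt (verit) mult_left_le_one_le)
    next
      case False
      have "F \<le> measure \<mu> {y. \<bar>x\<bar> \<le> \<bar>\<theta> \<bullet> y\<bar>}"
        unfolding F_def using False sets(2) by (intro finite_measure_mono) auto
      then show ?thesis using F by (smt (verit) mult_right_le_one_le)
    qed
    also have "\<dots> \<le> max M 0 / \<bar>x\<bar> powr s"
      using False \<mu> s \<theta> by (intro measure_abs_inner_ge_le_moment) auto
    also have "\<dots> \<le> (max M 0 + 1) / \<bar>x\<bar> powr s"
      by (intro divide_right_mono) auto
    finally show ?thesis using False by (simp add: moment_tail_bound_def F_def)
  qed
qed

definition moment_tail_integral_bound :: "real \<Rightarrow> real \<Rightarrow> real \<Rightarrow> real" where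
  "moment_tail_integral_bound p s M = 2 + 4 * sqrt (max M 0 + 1) / (s - 2 * p)"

lemma moment_tail_integral_bound_pos:
  "s > 2 * p \<Longrightarrow> moment_tail_integral_bound p s M > 0"
  unfolding moment_tail_integral_bound_def by (simp add: add_pos_nonneg)

lemma nn_integral_moment_tail_bound_le:
  fixes p s M :: real
  assumes p: "p \<ge> 1" and s: "s > 2 * p"
  shows "(\<integral>\<^sup>+x. ennreal (\<bar>x\<bar> powr (p - 1) * sqrt (moment_tail_bound s M x)) \<partial>lborel)
    \<le> ennreal (moment_tail_integral_bound p s M)"
proof -
  define e where "e = p - 1 - s / 2"
  define M1 where "M1 = max M 0 + 1"
  have e: "e < -1" using s unfolding e_def by simp
  have tail_right: "(\<integral>\<^sup>+x. ennreal (x powr e) * indicator {1..} x \<partial>lborel) = ennreal (-1 / (e + 1))"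
    using nn_integral_has_integral_lebesgue'[OF _ has_integral_powr_to_inf[OF e, of 1]] by simp
  have tail_left: "(\<integral>\<^sup>+x. ennreal ((- x) powr e) * indicator {..-1} x \<partial>lborel) = ennreal (-1 / (e + 1))"
  proof -
    have "(\<integral>\<^sup>+x. ennreal ((- x) powr e) * indicator {..-1} x \<partial>lborel)
       = (\<integral>\<^sup>+x. ennreal ((- x) powr e) * indicator {..-1} x \<partial>distr lborel borel uminus)"
      by (simp add: lborel_distr_uminus)
    also have "\<dots> = (\<integral>\<^sup>+x. ennreal (x powr e) * indicator {1..} x \<partial>lborel)"
      by (subst nn_integral_distr) (auto intro!: nn_integral_cong simp: indicator_def)
    finally show ?thesis using tail_right by simp
  qed
  have pointwise: "ennreal (\<bar>x\<bar> powr (p - 1) * sqrt (moment_tail_bound s M x))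
     \<le> indicator {-1..1} x + ennreal (sqrt M1) *
        (ennreal (x powr e) * indicator {1..} x + ennreal ((- x) powr e) * indicator {..-1} x)" for x
  proof (cases "\<bar>x\<bar> \<le> 1")
    case True
    then have "\<bar>x\<bar> powr (p - 1) \<le> 1" using p by (intro powr_le1) auto
    then have "ennreal (\<bar>x\<bar> powr (p - 1) * sqrt (moment_tail_bound s M x)) \<le> indicator {-1..1} x"
      using True by (auto simp: moment_tail_bound_def indicator_def)
    then show ?thesis by (rule add_increasing2[rotated]) simp
  next
    case False
    have "sqrt (\<bar>x\<bar> powr s) = \<bar>x\<bar> powr (s / 2)"
      by (simp add: powr_half_sqrt[symmetric] powr_powr)
    then have "\<bar>x\<bar> powr (p - 1) * sqrt (moment_tail_bound s M x) = sqrt M1 * \<bar>x\<bar> powr e"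
      using False by (simp add: moment_tail_bound_def M1_def real_sqrt_divide e_def powr_diff)
    moreover have "x > 1 \<or> x < -1" using False by auto
    ultimately show ?thesis by (auto simp: indicator_def ennreal_mult M1_def)
  qed
  have "(\<integral>\<^sup>+x. ennreal (\<bar>x\<bar> powr (p - 1) * sqrt (moment_tail_bound s M x)) \<partial>lborel)
     \<le> (\<integral>\<^sup>+x. indicator {-1..1} x + ennreal (sqrt M1) *
        (ennreal (x powr e) * indicator {1..} x + ennreal ((- x) powr e) * indicator {..-1} x) \<partial>lborel)"
    by (intro nn_integral_mono pointwise)
  also have "\<dots> = ennreal 2 + ennreal (sqrt M1) * (ennreal (-1 / (e + 1)) + ennreal (-1 / (e + 1)))"
    by (simp add: nn_integral_add nn_integral_cmult tail_right tail_left del: ennreal_plus)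
  also have "\<dots> = ennreal (moment_tail_integral_bound p s M)"
  proof -
    define r where "r = -1 / (e + 1)"
    have r: "r \<ge> 0" using e by (simp add: r_def divide_nonneg_neg)
    have "ennreal (2 + sqrt M1 * (r + r)) = ennreal 2 + ennreal (sqrt M1) * (ennreal r + ennreal r)"
      using r by (simp only: ennreal_plus ennreal_mult real_sqrt_ge_zero add_nonneg_nonneg
          mult_nonneg_nonneg zero_le_numeral M1_def max.cobounded2 le_add_same_cancel2 zero_le_one)
    then have "ennreal 2 + ennreal (sqrt M1) * (ennreal r + ennreal r) = ennreal (2 + sqrt M1 * (r + r))"
      by (rule sym)
    also have "r + r = 4 / (s - 2 * p)"
    proof -
      have "e + 1 = - ((s - 2 * p) / 2)" by (simp add: e_def field_simps)
      then show ?thesis by (simp add: r_def)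
    qed
    also have "2 + sqrt M1 * (4 / (s - 2 * p)) = moment_tail_integral_bound p s M"
      by (simp add: M1_def moment_tail_integral_bound_def)
    finally show ?thesis by (simp only: r_def)
  qed
  finally show ?thesis .
qed

section \<open>Concavity of the root and averaging over directions\<close>

lemma powr_inverse_le_tangent:
  fixes p a b :: real
  assumes p: "p \<ge> 1" and a: "a > 0" and b: "b \<ge> 0"
  shows "b powr (1 / p) \<le> a powr (1 / p - 1) / p * b + a powr (1 / p) * (1 - 1 / p)"
proof (cases "b = 0")
  case True
  then show ?thesis using p a by auto
next
  case False
  define t where "t = b / a"
  have t: "t > 0" using False b a by (simp add: t_def)
  have "t powr (1 / p) * 1 powr (1 - 1 / p) \<le> (1 / p) * t + (1 - 1 / p) * 1"
    using p t by (intro Youngs_inequality_0) auto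
  then have young: "t powr (1 / p) \<le> t / p + (1 - 1 / p)" by simp
  have "b powr (1 / p) = a powr (1 / p) * t powr (1 / p)"
    using a b by (simp add: t_def powr_divide)
  also have "\<dots> \<le> a powr (1 / p) * (t / p + (1 - 1 / p))"
    using young by (intro mult_left_mono) auto
  also have "\<dots> = a powr (1 / p) / a * b / p + a powr (1 / p) * (1 - 1 / p)"
    using a by (simp add: t_def field_simps)
  also have "a powr (1 / p) / a = a powr (1 / p - 1)"
    using a by (simp add: powr_diff)
  finally show ?thesis by (simp add: field_simps)
qed

text \<open>Jensen's inequality for the concave root \<open>y \<mapsto> y\<^bsup>1/p\<^esup>\<close>, extended by \<open>\<infinity>\<close> and applied through a
  measurable majorant \<open>B\<close> of \<open>Y\<close> (which itself need not be measurable).\<close>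
lemma (in prob_space) nn_integral_root_le:
  fixes Y B :: "'a \<Rightarrow> ennreal" and p a :: real
  assumes p: "p \<ge> 1" and a: "a > 0" and B: "B \<in> borel_measurable M" "(\<integral>\<^sup>+\<omega>. B \<omega> \<partial>M) \<le> ennreal a"
    and Y_le_B: "\<And>\<omega>. Y \<omega> \<le> B \<omega>"
  shows "(\<integral>\<^sup>+\<omega>. (if Y \<omega> = \<infinity> then \<infinity> else ennreal (enn2real (Y \<omega>) powr (1 / p))) \<partial>M)
    \<le> ennreal (a powr (1 / p))"
proof -
  define \<alpha> \<beta> where "\<alpha> = a powr (1 / p - 1) / p" and "\<beta> = a powr (1 / p) * (1 - 1 / p)"
  have \<alpha>\<beta>: "\<alpha> > 0" "\<beta> \<ge> 0" using a p by (auto simp: \<alpha>_def \<beta>_def)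
  have tangent: "(if Y \<omega> = \<infinity> then \<infinity> else ennreal (enn2real (Y \<omega>) powr (1 / p)))
      \<le> ennreal \<alpha> * B \<omega> + ennreal \<beta>" for \<omega>
  proof (cases "B \<omega> = \<infinity>")
    case True
    then show ?thesis using \<alpha>\<beta> by (simp add: ennreal_mult_eq_top_iff)
  next
    case False
    then obtain b where b: "B \<omega> = ennreal b" "b \<ge> 0" by (cases "B \<omega>") auto
    then obtain y where y: "Y \<omega> = ennreal y" "y \<ge> 0" "y \<le> b"
      using Y_le_B[of \<omega>] by (cases "Y \<omega>") (auto simp: top_unique)
    have "y powr (1 / p) \<le> b powr (1 / p)"
      using y p by (intro powr_mono2) auto
    also have "\<dots> \<le> \<alpha> * b + \<beta>"
      unfolding \<alpha>_def \<beta>_def using p a b by (intro powr_inverse_le_tangent) auto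
    finally have "ennreal (y powr (1 / p)) \<le> ennreal (\<alpha> * b + \<beta>)"
      by (rule ennreal_leI)
    then show ?thesis
      using y b \<alpha>\<beta> by (simp add: ennreal_mult)
  qed
  have "(\<integral>\<^sup>+\<omega>. (if Y \<omega> = \<infinity> then \<infinity> else ennreal (enn2real (Y \<omega>) powr (1 / p))) \<partial>M)
      \<le> (\<integral>\<^sup>+\<omega>. ennreal \<alpha> * B \<omega> + ennreal \<beta> \<partial>M)"
    by (intro nn_integral_mono tangent)
  also have "\<dots> = ennreal \<alpha> * (\<integral>\<^sup>+\<omega>. B \<omega> \<partial>M) + ennreal \<beta>"
    using B(1) by (simp add: nn_integral_add nn_integral_cmult emeasure_space_1)
  also have "\<dots> \<le> ennreal \<alpha> * ennreal a + ennreal \<beta>"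
    by (intro add_right_mono mult_left_mono B(2)) auto
  also have "\<dots> = ennreal (a powr (1 / p))"
  proof -
    have "a powr (1 / p - 1) = a powr (1 / p) / a"
      using a by (simp add: powr_diff)
    then have "\<alpha> * a + \<beta> = a powr (1 / p)"
      using a p by (simp add: \<alpha>_def \<beta>_def field_simps)
    moreover have "ennreal \<alpha> * ennreal a + ennreal \<beta> = ennreal (\<alpha> * a + \<beta>)"
      using \<alpha>\<beta> a by (simp add: ennreal_mult)
    ultimately show ?thesis by simp
  qed
  finally show ?thesis .
qed

lemma nn_integral_average_le:
  fixes f :: "'a \<times> 'b \<Rightarrow> ennreal"
  assumes "sigma_finite_measure M" "finite_measure N"
    and f: "f \<in> borel_measurable (M \<Otimes>\<^sub>M N)" and N: "emeasure N (space N) \<noteq> 0"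
    and bound: "\<And>y. y \<in> space N \<Longrightarrow> (\<integral>\<^sup>+x. f (x, y) \<partial>M) \<le> a"
  shows "(\<integral>\<^sup>+x. (\<integral>\<^sup>+y. f (x, y) \<partial>N) / emeasure N (space N) \<partial>M) \<le> a"
proof -
  interpret N: finite_measure N by fact
  interpret pair_sigma_finite M N
    using assms(1) by (simp add: pair_sigma_finite_def N.sigma_finite_measure_axioms)
  define G where "G = emeasure N (space N)"
  have G: "G \<noteq> 0" "G \<noteq> \<infinity>" using N by (simp_all add: G_def)
  have "(\<integral>\<^sup>+x. (\<integral>\<^sup>+y. f (x, y) \<partial>N) / G \<partial>M) = (\<integral>\<^sup>+x. (\<integral>\<^sup>+y. f (x, y) \<partial>N) \<partial>M) / G"
    unfolding divide_ennreal_def using f by (intro nn_integral_multc) (simp add: N.borel_measurable_nn_integral_fst)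
  also have "(\<integral>\<^sup>+x. (\<integral>\<^sup>+y. f (x, y) \<partial>N) \<partial>M) = (\<integral>\<^sup>+y. (\<integral>\<^sup>+x. f (x, y) \<partial>M) \<partial>N)"
    using f by (intro Fubini'[symmetric]) simp
  also have "\<dots> \<le> (\<integral>\<^sup>+y. a \<partial>N)"
    by (intro nn_integral_mono bound)
  also have "\<dots> = a * G"
    by (simp add: G_def)
  finally have "(\<integral>\<^sup>+x. (\<integral>\<^sup>+y. f (x, y) \<partial>N) / G \<partial>M) \<le> a * G / G"
    by (simp add: divide_right_mono_ennreal)
  then show ?thesis
    using G by (simp add: G_def ennreal_mult_divide_eq)
qed

section \<open>Empirical measures of i.i.d. samples\<close>

locale iid_sample =
  P: prob_space P + \<mu>: prob_space \<mu>
  for P :: "'w measure" and \<mu> :: "'a::{real_inner, polish_space} measure"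
    and X :: "nat \<Rightarrow> 'w \<Rightarrow> 'a" and n :: nat +
  assumes sets_\<mu>: "sets \<mu> = sets borel"
    and indep: "P.indep_vars (\<lambda>_. borel) X {1..n}"
    and distr_X: "\<And>k. k \<in> {1..n} \<Longrightarrow> distr P borel (X k) = \<mu>"
    and n_ge_1: "n \<ge> 1"
begin

definition empirical :: "'w \<Rightarrow> 'a measure" where
  "empirical \<omega> = empirical_measure (map (\<lambda>k. X k \<omega>) [1..<n+1])"

definition proj_cdf :: "'a \<Rightarrow> real \<Rightarrow> real" where
  "proj_cdf \<theta> x = measure \<mu> {y. \<theta> \<bullet> y \<le> x}"

definition empirical_proj_cdf :: "'w \<Rightarrow> 'a \<Rightarrow> real \<Rightarrow> real" where
  "empirical_proj_cdf \<omega> \<theta> x = (\<Sum>k\<in>{1..n}. indicator {y. \<theta> \<bullet> y \<le> x} (X k \<omega>)) / real n"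

definition weighted_cdf_gap :: "real \<Rightarrow> 'w \<Rightarrow> 'a \<Rightarrow> ennreal" where
  "weighted_cdf_gap p \<omega> \<theta> =
    (\<integral>\<^sup>+x. ennreal (\<bar>x\<bar> powr (p - 1) * \<bar>empirical_proj_cdf \<omega> \<theta> x - proj_cdf \<theta> x\<bar>) \<partial>lborel)"

lemma measurable_X[measurable]: "k \<in> {1..n} \<Longrightarrow> X k \<in> borel_measurable P"
  using indep unfolding P.indep_vars_def by auto

lemma space_\<mu>: "space \<mu> = UNIV"
  using sets_eq_imp_space_eq[OF sets_\<mu>] by simp

lemma measurable_inner_\<mu>[measurable]: "(\<lambda>y. \<theta> \<bullet> y) \<in> borel_measurable \<mu>"
  by (subst measurable_cong_sets[OF sets_\<mu> refl]) simp

lemma cdf_proj_measure_empirical: "cdf (proj_measure (empirical \<omega>) \<theta>) = empirical_proj_cdf \<omega> \<theta>"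
proof
  fix x
  have "cdf (proj_measure (empirical \<omega>) \<theta>) x = measure (empirical \<omega>) {y. \<theta> \<bullet> y \<le> x}"
    unfolding cdf_def proj_measure_def empirical_def empirical_measure_def
    by (subst measure_distr) (auto simp: vimage_def)
  also have "\<dots> = empirical_proj_cdf \<omega> \<theta> x"
    unfolding empirical_def empirical_proj_cdf_def by (rule measure_empirical_measure[OF n_ge_1])
  finally show "cdf (proj_measure (empirical \<omega>) \<theta>) x = empirical_proj_cdf \<omega> \<theta> x" .
qed

lemma cdf_proj_measure: "cdf (proj_measure \<mu> \<theta>) = proj_cdf \<theta>"
proof
  fix x
  show "cdf (proj_measure \<mu> \<theta>) x = proj_cdf \<theta> x"
    unfolding cdf_def proj_measure_def proj_cdf_def
    by (subst measure_distr) (auto simp: vimage_def space_\<mu>)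
qed

lemma Wasserstein_pow_proj_empirical_le:
  assumes "p \<ge> 1"
  shows "Wasserstein_pow p (proj_measure (empirical \<omega>) \<theta>) (proj_measure \<mu> \<theta>)
    \<le> ennreal (p * 2 powr p) * weighted_cdf_gap p \<omega> \<theta>"
proof -
  have "real_distribution (proj_measure (empirical \<omega>) \<theta>)"
    unfolding real_distribution_def real_distribution_axioms_def proj_measure_def empirical_def empirical_measure_def
    by (auto intro!: measure_pmf.prob_space_distr)
  moreover have "real_distribution (proj_measure \<mu> \<theta>)"
    unfolding real_distribution_def real_distribution_axioms_def proj_measure_def
    by (auto intro!: \<mu>.prob_space_distr)
  ultimately have "Wasserstein_pow p (proj_measure (empirical \<omega>) \<theta>) (proj_measure \<mu> \<theta>)
    \<le> ennreal (p * 2 powr p) * (\<integral>\<^sup>+x. ennreal (\<bar>x\<bar> powr (p - 1) *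
        \<bar>cdf (proj_measure (empirical \<omega>) \<theta>) x - cdf (proj_measure \<mu> \<theta>) x\<bar>) \<partial>lborel)"
    by (rule Wasserstein_pow_le_cdf_integral[OF assms])
  then show ?thesis
    by (simp only: weighted_cdf_gap_def cdf_proj_measure_empirical cdf_proj_measure)
qed

lemma measurable_proj_cdf[measurable]:
  "(\<lambda>z. proj_cdf (fst z) (snd z)) \<in> borel_measurable ((borel :: 'a measure) \<Otimes>\<^sub>M lborel)"
proof -
  define N where "N = ((borel :: 'a measure) \<Otimes>\<^sub>M (lborel :: real measure)) \<Otimes>\<^sub>M \<mu>"
  have [measurable]: "(\<lambda>z. fst (fst z)) \<in> measurable N (borel :: 'a measure)"
    "(\<lambda>z. snd (fst z)) \<in> measurable N (borel :: real measure)"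
    unfolding N_def by measurable
  have [measurable]: "snd \<in> measurable N (borel :: 'a measure)"
    unfolding N_def by (rule measurable_compose[OF measurable_snd]) (simp add: measurable_cong_sets[OF sets_\<mu> refl])
  define Q where "Q = {z \<in> space N. fst (fst z) \<bullet> snd z \<le> snd (fst z)}"
  have "Q \<in> sets N"
    unfolding Q_def by (rule predE) measurable
  then have "(\<lambda>w. emeasure \<mu> (Pair w -` Q)) \<in> borel_measurable (borel \<Otimes>\<^sub>M lborel)"
    unfolding N_def by (rule \<mu>.measurable_emeasure_Pair)
  moreover have "Pair w -` Q = {y. fst w \<bullet> y \<le> snd w}" for w
    unfolding Q_def N_def by (auto simp: space_pair_measure space_\<mu>)
  ultimately have "(\<lambda>w. emeasure \<mu> {y. fst w \<bullet> y \<le> snd w}) \<in> borel_measurable (borel \<Otimes>\<^sub>M lborel)"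
    by simp
  then show ?thesis
    unfolding proj_cdf_def measure_def by measurable
qed

lemma measurable_empirical_proj_cdf[measurable]:
  "(\<lambda>z. empirical_proj_cdf (fst (fst z)) (snd (fst z)) (snd z))
    \<in> borel_measurable ((P \<Otimes>\<^sub>M (borel :: 'a measure)) \<Otimes>\<^sub>M lborel)"
  unfolding empirical_proj_cdf_def
proof (intro borel_measurable_divide borel_measurable_sum)
  fix k assume "k \<in> {1..n}"
  then have [measurable]: "X k \<in> borel_measurable P" by (rule measurable_X)
  show "(\<lambda>z. indicator {y. snd (fst z) \<bullet> y \<le> snd z} (X k (fst (fst z))) :: real)
      \<in> borel_measurable ((P \<Otimes>\<^sub>M borel) \<Otimes>\<^sub>M lborel)"
    unfolding indicator_def mem_Collect_eq by measurable
qed simp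

lemma measurable_weighted_cdf_gap_integrand[measurable]:
  "(\<lambda>z. ennreal (\<bar>snd z\<bar> powr (p - 1) *
      \<bar>empirical_proj_cdf (fst (fst z)) (snd (fst z)) (snd z) - proj_cdf (snd (fst z)) (snd z)\<bar>))
    \<in> borel_measurable ((P \<Otimes>\<^sub>M (borel :: 'a measure)) \<Otimes>\<^sub>M lborel)"
proof -
  have [measurable]: "(\<lambda>z. proj_cdf (snd (fst z)) (snd z)) \<in> borel_measurable ((P \<Otimes>\<^sub>M borel) \<Otimes>\<^sub>M lborel)"
    using measurable_compose[OF measurable_Pair[OF measurable_compose[OF measurable_fst measurable_snd]
        measurable_snd] measurable_proj_cdf] by simp
  show ?thesis by measurable
qed

lemma measurable_weighted_cdf_gap[measurable]:
  "(\<lambda>z. weighted_cdf_gap p (fst z) (snd z)) \<in> borel_measurable (P \<Otimes>\<^sub>M (borel :: 'a measure))"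
  unfolding weighted_cdf_gap_def using measurable_weighted_cdf_gap_integrand
  by (intro lborel.borel_measurable_nn_integral) (simp add: case_prod_beta')

lemma measurable_weighted_cdf_gap_fixed_direction[measurable]:
  "(\<lambda>\<omega>. weighted_cdf_gap p \<omega> \<theta>) \<in> borel_measurable P"
  using measurable_compose[OF measurable_Pair[OF measurable_ident_sets[OF refl] measurable_const]
      measurable_weighted_cdf_gap, of \<theta>] by simp

lemma nn_integral_empirical_proj_cdf_deviation_le:
  assumes "moment s \<mu> = ennreal M" and "s \<ge> 0" and "norm \<theta> \<le> 1"
  shows "(\<integral>\<^sup>+\<omega>. ennreal \<bar>empirical_proj_cdf \<omega> \<theta> x - proj_cdf \<theta> x\<bar> \<partial>P)
    \<le> ennreal (sqrt (moment_tail_bound s M x / n))"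
  unfolding empirical_proj_cdf_def proj_cdf_def
  by (rule P.nn_integral_empirical_frequency_deviation_le[OF indep distr_X _ n_ge_1 moment_tail_bound_pos])
    (simp_all add: cdf_variance_le_moment_tail_bound[OF \<mu>.prob_space_axioms sets_\<mu> assms])

lemma nn_integral_weighted_cdf_gap_le:
  assumes p: "p \<ge> 1" and s: "s > 2 * p" and M: "moment s \<mu> = ennreal M" and \<theta>: "norm \<theta> \<le> 1"
  shows "(\<integral>\<^sup>+\<omega>. weighted_cdf_gap p \<omega> \<theta> \<partial>P) \<le> ennreal (moment_tail_integral_bound p s M / sqrt n)"
proof -
  interpret pair_sigma_finite P lborel
    by (simp add: pair_sigma_finite_def P.sigma_finite_measure_axioms lborel.sigma_finite_measure_axioms)
  define g where "g x = \<bar>x\<bar> powr (p - 1) * sqrt (moment_tail_bound s M x)" for x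
  have [measurable]: "g \<in> borel_measurable lborel"
    unfolding g_def moment_tail_bound_def by measurable
  have integrand: "(\<lambda>(\<omega>, x). ennreal (\<bar>x\<bar> powr (p - 1) * \<bar>empirical_proj_cdf \<omega> \<theta> x - proj_cdf \<theta> x\<bar>))
      \<in> borel_measurable (P \<Otimes>\<^sub>M lborel)"
    using measurable_compose[OF measurable_Pair[OF measurable_Pair[OF measurable_fst measurable_const]
        measurable_snd] measurable_weighted_cdf_gap_integrand, of \<theta>]
    by (simp add: split_beta')
  have pointwise: "(\<integral>\<^sup>+\<omega>. ennreal (\<bar>x\<bar> powr (p - 1) * \<bar>empirical_proj_cdf \<omega> \<theta> x - proj_cdf \<theta> x\<bar>) \<partial>P)
      \<le> ennreal (g x) * ennreal (1 / sqrt n)" for x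
  proof -
    have [measurable]: "(\<lambda>\<omega>. empirical_proj_cdf \<omega> \<theta> x) \<in> borel_measurable P"
      using measurable_compose[OF measurable_Pair[OF measurable_Pair[OF measurable_ident_sets[OF refl]
          measurable_const] measurable_const] measurable_empirical_proj_cdf, of \<theta> x]
      by simp
    have "(\<integral>\<^sup>+\<omega>. ennreal (\<bar>x\<bar> powr (p - 1) * \<bar>empirical_proj_cdf \<omega> \<theta> x - proj_cdf \<theta> x\<bar>) \<partial>P)
        = ennreal (\<bar>x\<bar> powr (p - 1)) * (\<integral>\<^sup>+\<omega>. ennreal \<bar>empirical_proj_cdf \<omega> \<theta> x - proj_cdf \<theta> x\<bar> \<partial>P)"
      by (simp add: ennreal_mult nn_integral_cmult)
    also have "\<dots> \<le> ennreal (\<bar>x\<bar> powr (p - 1)) * ennreal (sqrt (moment_tail_bound s M x / n))"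
      using s p M \<theta> by (intro mult_left_mono nn_integral_empirical_proj_cdf_deviation_le) auto
    also have "\<dots> = ennreal (g x) * ennreal (1 / sqrt n)"
      using moment_tail_bound_pos[of s M x]
      by (simp add: g_def real_sqrt_divide ennreal_mult[symmetric] mult.assoc)
    finally show ?thesis .
  qed
  have "(\<integral>\<^sup>+\<omega>. weighted_cdf_gap p \<omega> \<theta> \<partial>P)
      = (\<integral>\<^sup>+x. (\<integral>\<^sup>+\<omega>. ennreal (\<bar>x\<bar> powr (p - 1) * \<bar>empirical_proj_cdf \<omega> \<theta> x - proj_cdf \<theta> x\<bar>) \<partial>P) \<partial>lborel)"
    unfolding weighted_cdf_gap_def using integrand by (intro Fubini'[symmetric]) simp
  also have "\<dots> \<le> (\<integral>\<^sup>+x. ennreal (g x) * ennreal (1 / sqrt n) \<partial>lborel)"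
    by (intro nn_integral_mono pointwise)
  also have "\<dots> = (\<integral>\<^sup>+x. ennreal (g x) \<partial>lborel) * ennreal (1 / sqrt n)"
    by (rule nn_integral_multc) measurable
  also have "\<dots> \<le> ennreal (moment_tail_integral_bound p s M) * ennreal (1 / sqrt n)"
    unfolding g_def by (intro mult_right_mono nn_integral_moment_tail_bound_le p s) auto
  also have "\<dots> = ennreal (moment_tail_integral_bound p s M / sqrt n)"
    using moment_tail_integral_bound_pos[OF s, of M] by (subst ennreal_mult[symmetric]) auto
  finally show ?thesis .
qed

lemma nn_integral_sliced_W_empirical_le:
  fixes \<gamma> :: "'a measure" and p s M :: real
  assumes p: "p \<ge> 1" and s: "s > 2 * p" and M: "moment s \<mu> = ennreal M"
    and \<gamma>: "finite_measure \<gamma>" "sets \<gamma> = sets (restrict_space borel (sphere 0 1))"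
      "emeasure \<gamma> (sphere 0 1) > 0"
  shows "(\<integral>\<^sup>+\<omega>. sliced_W p \<gamma> (empirical \<omega>) \<mu> \<partial>P)
    \<le> ennreal ((p * 2 powr p * moment_tail_integral_bound p s M) powr (1 / p) * real n powr (- 1 / (2 * p)))"
proof -
  interpret \<gamma>: finite_measure \<gamma> by (rule \<gamma>(1))
  have space_\<gamma>: "space \<gamma> = sphere 0 1"
    using sets_eq_imp_space_eq[OF \<gamma>(2)] by (simp add: space_restrict_space)
  have "measurable \<gamma> (borel :: 'a measure) = measurable (restrict_space borel (sphere 0 1)) borel"
    by (rule measurable_cong_sets[OF \<gamma>(2) refl])
  then have id_\<gamma>: "(\<lambda>\<theta>. \<theta>) \<in> measurable \<gamma> (borel :: 'a measure)"
    by (simp add: measurable_restrict_space1)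
  define c K a where "c = p * 2 powr p" and "K = moment_tail_integral_bound p s M" and "a = c * K / sqrt n"
  have c: "c > 0" and K: "K > 0" using p moment_tail_integral_bound_pos[OF s] by (auto simp: c_def K_def)
  then have a: "a > 0" using n_ge_1 by (simp add: a_def)
  define f where "f z = ennreal c * weighted_cdf_gap p (fst z) (snd z)" for z
  have "(\<lambda>z. z) \<in> measurable (P \<Otimes>\<^sub>M \<gamma>) (P \<Otimes>\<^sub>M (borel :: 'a measure))"
    using measurable_Pair[OF measurable_fst measurable_compose[OF measurable_snd id_\<gamma>]] by simp
  from measurable_compose[OF this measurable_weighted_cdf_gap]
  have f[measurable]: "f \<in> borel_measurable (P \<Otimes>\<^sub>M \<gamma>)"
    unfolding f_def by measurable
  define B where "B \<omega> = (\<integral>\<^sup>+\<theta>. f (\<omega>, \<theta>) \<partial>\<gamma>) / emeasure \<gamma> (space \<gamma>)" for \<omega>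
  have "sliced_W_pow p \<gamma> (empirical \<omega>) \<mu> \<le> B \<omega>" for \<omega>
    unfolding sliced_W_pow_def B_def f_def space_\<gamma> c_def
    using Wasserstein_pow_proj_empirical_le[OF p] by (intro divide_right_mono_ennreal nn_integral_mono) simp
  moreover have "B \<in> borel_measurable P"
    unfolding B_def divide_ennreal_def using \<gamma>.borel_measurable_nn_integral_fst[OF f]
    by measurable
  moreover have "(\<integral>\<^sup>+\<omega>. B \<omega> \<partial>P) \<le> ennreal a"
    unfolding B_def
  proof (rule nn_integral_average_le[OF P.sigma_finite_measure_axioms \<gamma>(1) f])
    show "emeasure \<gamma> (space \<gamma>) \<noteq> 0" using \<gamma>(3) space_\<gamma> by simp
    fix \<theta> assume "\<theta> \<in> space \<gamma>"
    then have \<theta>: "norm \<theta> \<le> 1" by (simp add: space_\<gamma>)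
    have "(\<integral>\<^sup>+\<omega>. f (\<omega>, \<theta>) \<partial>P) = ennreal c * (\<integral>\<^sup>+\<omega>. weighted_cdf_gap p \<omega> \<theta> \<partial>P)"
      unfolding f_def by (simp add: nn_integral_cmult)
    also have "\<dots> \<le> ennreal c * ennreal (K / sqrt n)"
      unfolding K_def by (intro mult_left_mono nn_integral_weighted_cdf_gap_le p s M \<theta>) simp
    also have "\<dots> = ennreal a"
      using c K by (simp add: a_def flip: ennreal_mult)
    finally show "(\<integral>\<^sup>+\<omega>. f (\<omega>, \<theta>) \<partial>P) \<le> ennreal a" .
  qed
  ultimately have "(\<integral>\<^sup>+\<omega>. sliced_W p \<gamma> (empirical \<omega>) \<mu> \<partial>P) \<le> ennreal (a powr (1 / p))"
    unfolding sliced_W_def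
    by (intro P.nn_integral_root_le[OF p a, where Y="\<lambda>\<omega>. sliced_W_pow p \<gamma> (empirical \<omega>) \<mu>"])
  also have "a powr (1 / p) = (c * K) powr (1 / p) * real n powr (- 1 / (2 * p))"
  proof -
    have n: "real n > 0" using n_ge_1 by simp
    have "a powr (1 / p) = (c * K) powr (1 / p) / (real n powr (1 / 2)) powr (1 / p)"
      unfolding a_def using c K n by (simp add: powr_half_sqrt powr_divide)
    also have "(real n powr (1 / 2)) powr (1 / p) = real n powr (1 / (2 * p))"
      by (simp add: powr_powr)
    also have "real n powr (1 / (2 * p)) = inverse (real n powr (- 1 / (2 * p)))"
      using n by (simp add: powr_minus[symmetric])
    finally show ?thesis by (simp only: divide_inverse inverse_inverse_eq)
  qed
  finally show ?thesis unfolding c_def K_def .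
qed

end

theorem mainTheorem8:
  fixes p s M :: real
  assumes inf_dim: "\<not> (\<exists>B :: ('a::{real_inner, polish_space}) set. finite B \<and> span B = UNIV)"
    and p: "p \<ge> 1" and s: "s > 2 * p"
  shows "\<exists>C :: real. \<forall>(\<gamma> :: 'a measure) (\<mu> :: 'a measure) (P :: 'w measure) (Xs :: nat \<Rightarrow> 'w \<Rightarrow> 'a) (n :: nat).
    (finite_measure \<gamma> \<and> sets \<gamma> = sets (restrict_space borel (sphere (0::'a) 1))
     \<and> emeasure \<gamma> (sphere 0 1) > 0
     \<and> prob_space \<mu> \<and> sets \<mu> = sets (borel :: 'a measure) \<and> moment s \<mu> = ennreal M
     \<and> prob_space P \<and> prob_space.indep_vars P (\<lambda>_. borel) Xs {1..n}
     \<and> (\<forall>k\<in>{1..n}. distr P borel (Xs k) = \<mu>) \<and> n \<ge> 1)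
    \<longrightarrow> (\<integral>\<^sup>+ \<omega>. sliced_W p \<gamma> (empirical_measure (map (\<lambda>k. Xs k \<omega>) [1..<n+1])) \<mu> \<partial>P)
          \<le> ennreal (C * real n powr (- 1 / (2 * p)))"
proof (intro exI allI impI, elim conjE)
  fix \<gamma> \<mu> :: "'a measure" and P :: "'w measure" and Xs :: "nat \<Rightarrow> 'w \<Rightarrow> 'a" and n :: nat
  assume \<gamma>: "finite_measure \<gamma>" "sets \<gamma> = sets (restrict_space borel (sphere (0::'a) 1))"
      "emeasure \<gamma> (sphere 0 1) > 0"
    and \<mu>: "prob_space \<mu>" "sets \<mu> = sets (borel :: 'a measure)" "moment s \<mu> = ennreal M"
    and P: "prob_space P" "prob_space.indep_vars P (\<lambda>_. borel) Xs {1..n}"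
      "\<forall>k\<in>{1..n}. distr P borel (Xs k) = \<mu>" "n \<ge> 1"
  interpret iid_sample P \<mu> Xs n
    using \<mu> P by (simp add: iid_sample_def iid_sample_axioms_def)
  show "(\<integral>\<^sup>+ \<omega>. sliced_W p \<gamma> (empirical_measure (map (\<lambda>k. Xs k \<omega>) [1..<n+1])) \<mu> \<partial>P)
      \<le> ennreal ((p * 2 powr p * moment_tail_integral_bound p s M) powr (1 / p) * real n powr (- 1 / (2 * p)))"
    using nn_integral_sliced_W_empirical_le[OF p s \<mu>(3) \<gamma>] by (simp only: empirical_def)
qed

end
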